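(* Let $n$ nodes run the algorithm TLCB described in the context. Suppose $0<t_r\le n-f$, $0<t_s\le t_r$, $t_r+t_s>n$, and $0<t_b\le n-f_b$ where $f_b=t_r(n-t_r)/(t_r-t_s+1)$, and at most $f$ nodes fail. Then TLCB (with the $k$-th call to TLCB on a node constituting that node's $k$-th logical time-step) implements a $\mathrm{TSB}(t_r,t_b,n)$ full-spread broadcast abstraction.
   Context: Asynchronous network model. There are $n$ nodes numbered $1,\dots,n$; nodes may fail only by crashing permanently, after which they send no messages. A network-level Broadcast sends a message to all $n$ nodes (including the sender). Every message sent to a node that does not fail is eventually delivered after an arbitrary finite delay, and messages between each pair of nodes are delivered in the order sent. $\mathrm{Receive}()$ waits for and returns the next delivered message. Algorithm TLCR (node $i$, receive threshold $t_r$). Persistent state: a list $\vec R$ of sets, initially $[\{\}]$; $\vec R_k$ is its $k$-th element. On a call $\mathrm{TLCR}(m)$: append $\{\}$ to $\vec R$ and let $s=|\vec R|$; network-broadcast $\langle i,m,s,\vec R_{s-1}\rangle$; while $|\vec R_s|<t_r$: receive $\langle j,m',s',R'\rangle$; if $s'=s$, add $\langle j,m'\rangle$ to $\vec R_s$; else if $s'>s$, set $\vec R_s\leftarrow\vec R_s\cup R'$ (messages with $s'<s$ are ignored). Return $(\{m'\mid\langle j,m'\rangle\in\vec R_s\},\{\})$. Algorithm TLCB (node $i$, thresholds $t_r$, $t_s\le t_r$), built on TLCR with receive threshold $t_r$. On a call $\mathrm{TLCB}(m)$: $(R',\_)\leftarrow\mathrm{TLCR}(m)$; $(R'',\_)\leftarrow\mathrm{TLCR}(R')$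 (so $R''$ is a set of message-sets); $R\leftarrow R'\cup\bigcup_{X\in R''}X$; $B\leftarrow\{m'\mid$ at least $t_s$ of the message-sets in $R''$ contain $m'\}$; return $(R,B)$. Thus each TLCB step uses two TLCR steps. Threshold synchronous broadcast. A primitive, called once per logical time-step by each non-failed node with a message $m$ and returning a pair $(R,B)$ of message sets, provides $\mathrm{TSB}(t_r,t_b,t_s)$ if: (lock-step synchrony) a call at step $s$ returns (completing step $s$) unless the node fails first; (receive threshold) if node $i$'s call at step $s$ returns $(R,B)$, there is $N_R\subseteq\{1,\dots,n\}$ with $|N_R|\ge t_r$ such that $R$ is exactly the set of messages broadcast by the nodes of $N_R$ in step $s$; (broadcast threshold) there is $N_B\subseteq\{1,\dots,n\}$ with $|N_B|\ge t_b$ such that $B$ is exactly the set of messages broadcast by the nodes of $N_B$ in step $s$; (spread threshold) each $m'\in B$ returned to any node at step $s$ is contained in the receive sets $R$ returned in step $s$ to at least $t_s$ nodes (counting nodes that fail before completing step $s$ but would otherwise have received $m'$). Full-spread means $t_s=n$. *)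

theory Defs
  imports Complex_Main
begin

text \<open>Nodes are the naturals 1..n. A TLCR payload is either a plain message (first
TLCR step of a TLCB call) or a set of messages (second TLCR step).
A network message is a tuple (sender j, payload m, TLCR step s, sender's R_(s-1)).\<close>

type_synonym 'm payload = "'m + 'm set"
type_synonym 'm netmsg = "nat \<times> 'm payload \<times> nat \<times> (nat \<times> 'm payload) set"

text \<open>Local state of a node: the vector R (Rv k is R_k, stp = |R|), the result R'
of the first TLCR step of the current TLCB call, the log of messages passed to
TLCB calls, the log of TLCB results, and a crash flag.  stp = 1 means the node
has not yet made its first TLCB call.\<close>

record 'm lstate =
  Rv :: "nat \<Rightarrow> (nat \<times> 'm payload) set"
  stp :: nat
  fstR :: "'m set"
  ins :: "'m list"
  outs :: "('m set \<times> 'm set) list"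
  crashed :: bool

text \<open>Global configuration: local states, and for each ordered pair of nodes (i,j)
the FIFO history of all messages ever sent from i to j together with the number
already delivered (so the in-flight queue is drop (dlv c i j) (hist c i j)).\<close>

record 'm config =
  loc :: "nat \<Rightarrow> 'm lstate"
  hist :: "nat \<Rightarrow> nat \<Rightarrow> 'm netmsg list"
  dlv :: "nat \<Rightarrow> nat \<Rightarrow> nat"

type_synonym 'm app = "nat \<Rightarrow> ('m set \<times> 'm set) list \<Rightarrow> 'm"

definition tlcr_start :: "nat \<Rightarrow> 'm payload \<Rightarrow> 'm lstate \<Rightarrow> 'm lstate \<times> 'm netmsg" where
  "tlcr_start i p st = (let s = Suc (stp st) in
     (st\<lparr>Rv := (Rv st)(s := {}), stp := s\<rparr>, (i, p, s, Rv st (s - 1))))"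

text \<open>Start of a TLCB call: the application chooses the message (possibly depending
on the node's earlier TLCB results); first TLCR step with that message.\<close>
definition tlcb_call :: "'m app \<Rightarrow> nat \<Rightarrow> 'm lstate \<Rightarrow> 'm lstate \<times> 'm netmsg" where
  "tlcb_call app i st = (let m = app i (outs st) in tlcr_start i (Inl m) (st\<lparr>ins := ins st @ [m]\<rparr>))"

definition tlcr_recv :: "'m netmsg \<Rightarrow> 'm lstate \<Rightarrow> 'm lstate" where
  "tlcr_recv msg st = (case msg of (j, p, s', R') \<Rightarrow>
     (let s = stp st in
      if s' = s then st\<lparr>Rv := (Rv st)(s := insert (j, p) (Rv st s))\<rparr>
      else if s < s' then st\<lparr>Rv := (Rv st)(s := Rv st s \<union> R')\<rparr>
      else st))"

text \<open>After the first TLCR step of a TLCB call (even s) the second TLCR step is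
started with the received message set R'; after the second one (odd s) the TLCB call
returns (R,B) and the next TLCB call is started immediately.\<close>
definition tlcb_after :: "nat \<Rightarrow> nat \<Rightarrow> 'm app \<Rightarrow> nat \<Rightarrow> 'm lstate \<Rightarrow> 'm lstate \<times> 'm netmsg option" where
  "tlcb_after tr ts app i st = (let s = stp st; Rs = Rv st s in
     if card Rs < tr then (st, None)
     else if even s then
       (let R1 = {m. \<exists>j. (j, Inl m) \<in> Rs};
            (st', msg) = tlcr_start i (Inr R1) (st\<lparr>fstR := R1\<rparr>) in (st', Some msg))
     else
       (let R2 = {X. \<exists>j. (j, Inr X) \<in> Rs};
            R = fstR st \<union> \<Union>R2;
            B = {m. ts \<le> card {j. \<exists>X. (j, Inr X) \<in> Rs \<and> m \<in> X}};
            (st', msg) = tlcb_call app i (st\<lparr>outs := outs st @ [(R, B)]\<rparr>) in (st', Some msg)))"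

definition set_loc :: "nat \<Rightarrow> 'm lstate \<Rightarrow> 'm config \<Rightarrow> 'm config" where
  "set_loc i st c = c\<lparr>loc := (loc c)(i := st)\<rparr>"

definition send_all :: "nat \<Rightarrow> nat \<Rightarrow> 'm netmsg \<Rightarrow> 'm config \<Rightarrow> 'm config" where
  "send_all n i msg c = c\<lparr>hist := (\<lambda>a b. if a = i \<and> b \<in> {1..n} then hist c a b @ [msg] else hist c a b)\<rparr>"

definition crash_act :: "nat \<Rightarrow> 'm config \<Rightarrow> 'm config" where
  "crash_act i c = set_loc i ((loc c i)\<lparr>crashed := True\<rparr>) c"

definition start_act :: "nat \<Rightarrow> 'm app \<Rightarrow> nat \<Rightarrow> 'm config \<Rightarrow> 'm config" where
  "start_act n app i c = (let (st', msg) = tlcb_call app i (loc c i) in send_all n i msg (set_loc i st' c))"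

definition deliver_act :: "nat \<Rightarrow> nat \<Rightarrow> nat \<Rightarrow> 'm app \<Rightarrow> nat \<Rightarrow> nat \<Rightarrow> 'm config \<Rightarrow> 'm config" where
  "deliver_act n tr ts app k i c = (let
     msg = hist c k i ! dlv c k i;
     c1 = c\<lparr>dlv := (dlv c)(k := (dlv c k)(i := Suc (dlv c k i)))\<rparr>;
     (st2, om) = tlcb_after tr ts app i (tlcr_recv msg (loc c i))
   in case om of None \<Rightarrow> set_loc i st2 c1
               | Some msg' \<Rightarrow> send_all n i msg' (set_loc i st2 c1))"

definition init_lstate :: "'m lstate" where
  "init_lstate = \<lparr>Rv = (\<lambda>_. {}), stp = 1, fstR = {}, ins = [], outs = [], crashed = False\<rparr>"

definition init_config :: "'m config" where
  "init_config = \<lparr>loc = (\<lambda>_. init_lstate), hist = (\<lambda>_ _. []), dlv = (\<lambda>_ _. 0)\<rparr>"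

definition tlcb_step :: "nat \<Rightarrow> nat \<Rightarrow> nat \<Rightarrow> 'm app \<Rightarrow> 'm config \<Rightarrow> 'm config \<Rightarrow> bool" where
  "tlcb_step n tr ts app c c' \<longleftrightarrow> c' = c \<or>
     (\<exists>i\<in>{1..n}. \<not> crashed (loc c i) \<and>
        (c' = crash_act i c
         \<or> (stp (loc c i) = 1 \<and> c' = start_act n app i c)
         \<or> (\<exists>k\<in>{1..n}. 2 \<le> stp (loc c i) \<and> dlv c k i < length (hist c k i)
                      \<and> c' = deliver_act n tr ts app k i c)))"

definition failed :: "(nat \<Rightarrow> 'm config) \<Rightarrow> nat \<Rightarrow> bool" where
  "failed c i \<longleftrightarrow> (\<exists>t. crashed (loc (c t) i))"

definition fair :: "nat \<Rightarrow> (nat \<Rightarrow> 'm config) \<Rightarrow> bool" where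
  "fair n c \<longleftrightarrow> (\<forall>i\<in>{1..n}. \<not> failed c i \<longrightarrow>
      (\<exists>t. 2 \<le> stp (loc (c t) i)) \<and>
      (\<forall>k\<in>{1..n}. \<forall>t. \<exists>t'. length (hist (c t) k i) \<le> dlv (c t') k i))"

definition tlcb_execution :: "nat \<Rightarrow> nat \<Rightarrow> nat \<Rightarrow> 'm app \<Rightarrow> (nat \<Rightarrow> 'm config) \<Rightarrow> bool" where
  "tlcb_execution n tr ts app c \<longleftrightarrow>
     c 0 = init_config \<and> (\<forall>t. tlcb_step n tr ts app (c t) (c (Suc t))) \<and> fair n c"

text \<open>Node j broadcast m in (TLCB) step s, i.e. its s-th TLCB call (s >= 1) was with m.\<close>
definition broadcast_in :: "(nat \<Rightarrow> 'm config) \<Rightarrow> nat \<Rightarrow> nat \<Rightarrow> 'm \<Rightarrow> bool" where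
  "broadcast_in c j s m \<longleftrightarrow> (\<exists>t. s \<le> length (ins (loc (c t) j)) \<and> ins (loc (c t) j) ! (s - 1) = m)"

definition returns_at :: "(nat \<Rightarrow> 'm config) \<Rightarrow> nat \<Rightarrow> nat \<Rightarrow> 'm set \<Rightarrow> 'm set \<Rightarrow> bool" where
  "returns_at c i s R B \<longleftrightarrow> (\<exists>t. s \<le> length (outs (loc (c t) i)) \<and> outs (loc (c t) i) ! (s - 1) = (R, B))"

definition msgs_of :: "(nat \<Rightarrow> 'm config) \<Rightarrow> nat set \<Rightarrow> nat \<Rightarrow> 'm set" where
  "msgs_of c N s = {m. \<exists>j\<in>N. broadcast_in c j s m}"

definition threshold_set :: "nat \<Rightarrow> (nat \<Rightarrow> 'm config) \<Rightarrow> nat \<Rightarrow> nat \<Rightarrow> 'm set \<Rightarrow> bool" where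
  "threshold_set n c s th X \<longleftrightarrow>
     (\<exists>N \<subseteq> {1..n}. th \<le> card N \<and> (\<forall>j\<in>N. \<exists>m. broadcast_in c j s m) \<and> X = msgs_of c N s)"

definition TSB_full :: "nat \<Rightarrow> nat \<Rightarrow> nat \<Rightarrow> (nat \<Rightarrow> 'm config) \<Rightarrow> bool" where
  "TSB_full n tr tb c \<longleftrightarrow>
     \<comment> \<open>lock-step synchrony\<close>
     (\<forall>i\<in>{1..n}. \<not> failed c i \<longrightarrow> (\<forall>s\<ge>1. \<exists>R B. returns_at c i s R B)) \<and>
     \<comment> \<open>receive threshold and broadcast threshold\<close>
     (\<forall>i\<in>{1..n}. \<forall>s\<ge>1. \<forall>R B. returns_at c i s R B \<longrightarrow>
        threshold_set n c s tr R \<and> threshold_set n c s tb B) \<and>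
     \<comment> \<open>full spread (t_s = n)\<close>
     (\<forall>i\<in>{1..n}. \<forall>s\<ge>1. \<forall>R B m. returns_at c i s R B \<and> m \<in> B \<longrightarrow>
        (\<forall>j\<in>{1..n}. \<forall>R' B'. returns_at c j s R' B' \<longrightarrow> m \<in> R'))"

end

theory Submission
  imports Defs "HOL-Library.Sublist"
begin

text \<open>A completed TLCR step of a node has collected at least t_r entries, the genuine messages of
  distinct nodes for that step, and a message for the next step carries the sender's complete
  receive set. Hence the result (R, B) of the q-th TLCB call of a node is determined by first-step
  receive sets: with K the nodes whose second-step messages it received, R consists of the
  first-step messages of the node and of all k \<in> K, and B of the messages lying in the
  first-step sets of at least t_s nodes k \<in> K. This gives the receive threshold. Full spread:
  the t_s forwarders of m \<in> B and the t_r forwarders of any other node intersect since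
  t_r + t_s > n, and a forwarder sends the same set to everyone. Broadcast threshold: counting
  pairs (k, j) with k \<in> K and j in the first-step set of k gives at least |K| t_r pairs, while a
  node whose message is not in B occurs in fewer than t_s of these sets. Lock-step synchrony:
  at the least step at which some correct node stays forever, the first correct node to arrive
  eventually receives the step messages of all correct nodes, which are at least t_r.\<close>

section \<open>Counting\<close>

lemma card_filter_not_ge:
  assumes "card {j \<in> {1..n}. P j} \<le> f"
  shows "n - f \<le> card {j \<in> {1..n}. \<not> P j}"
proof -
  have "{j \<in> {1..n}. \<not> P j} = {1..n} - {j \<in> {1..n}. P j}"
    by blast
  moreover have "card ({1..n} - {j \<in> {1..n}. P j}) = card {1..n} - card {j \<in> {1..n}. P j}"
    by (intro card_Diff_subset) auto
  ultimately show ?thesis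
    using assms by simp
qed

lemma Int_nonempty_if_card_gt:
  assumes "finite U" "A \<subseteq> U" "B \<subseteq> U" "card U < card A + card B"
  shows "A \<inter> B \<noteq> {}"
proof
  assume "A \<inter> B = {}"
  then have "card A + card B = card (A \<union> B)"
    using assms(1-3) by (simp add: card_Un_disjoint finite_subset)
  also have "\<dots> \<le> card U"
    using assms(1-3) by (intro card_mono) auto
  finally show False
    using assms(4) by linarith
qed

lemma incidence_count:
  fixes K NB :: "nat set" and N :: "nat \<Rightarrow> nat set"
  assumes K: "finite K" and N: "\<forall>k\<in>K. N k \<subseteq> {1..n} \<and> tr \<le> card (N k)"
    and NB: "NB \<subseteq> {1..n}" and rare: "\<forall>j\<in>{1..n} - NB. card {k\<in>K. j \<in> N k} \<le> b"
  shows "card K * tr \<le> card NB * card K + (n - card NB) * b"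
proof -
  have "card K * tr = (\<Sum>k\<in>K. tr)"
    by simp
  also have "\<dots> \<le> (\<Sum>k\<in>K. card {j\<in>{1..n}. j \<in> N k})"
  proof (rule sum_mono)
    fix k assume "k \<in> K"
    then have "{j\<in>{1..n}. j \<in> N k} = N k"
      using N by blast
    then show "tr \<le> card {j\<in>{1..n}. j \<in> N k}"
      using N \<open>k \<in> K\<close> by simp
  qed
  also have "\<dots> = (\<Sum>j\<in>{1..n}. card {k\<in>K. j \<in> N k})"
    using K by (intro sum_multicount_gen) auto
  also have "\<dots> \<le> (\<Sum>j\<in>{1..n}. if j \<in> NB then card K else b)"
    using K rare by (intro sum_mono) (auto intro: card_mono)
  also have "\<dots> = card NB * card K + (n - card NB) * b"
    using NB by (simp add: sum.If_cases Int_absorb1 card_Diff_subset finite_subset Diff_eq[symmetric])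
  finally show ?thesis .
qed

text \<open>With t = t_s - 1, the hypothesis says K (t_r - a) \<le> (n - a) t; for a < t_r this gives
  t_r (t_r - a) \<le> (n - a) t, which rearranges to the claim.\<close>

lemma broadcast_threshold_arith:
  fixes a K n tr ts :: nat
  assumes "a \<le> n" "tr \<le> K" "tr \<le> n" "0 < ts" "ts \<le> tr"
    and count: "K * tr \<le> a * K + (n - a) * (ts - 1)"
  shows "real n - real tr * real (n - tr) / real (tr - ts + 1) \<le> real a"
proof -
  define t where "t = real (ts - 1)"
  have D: "real (tr - ts + 1) = real tr - t" "real tr - t > 0"
    using assms(4,5) by (auto simp: t_def of_nat_diff)
  have key: "real tr * real tr - real n * t \<le> real a * (real tr - t)"
  proof (cases "tr \<le> a")
    case True
    have "real tr * (real tr - t) \<le> real a * (real tr - t)"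
      using True D(2) by (intro mult_right_mono) auto
    moreover have "real tr * t \<le> real n * t"
      using assms(3) by (intro mult_right_mono) (auto simp: t_def)
    ultimately show ?thesis
      by (simp add: algebra_simps)
  next
    case False
    have "real K * real tr \<le> real a * real K + (real n - real a) * t"
      using count assms(1) unfolding t_def by (metis of_nat_add of_nat_diff of_nat_le_iff of_nat_mult)
    moreover have "real tr * (real tr - real a) \<le> real K * (real tr - real a)"
      using assms(2) False by (intro mult_right_mono) auto
    ultimately show ?thesis
      by (simp add: algebra_simps)
  qed
  have "real n - real tr * real (n - tr) / real (tr - ts + 1)
      = real n - real tr * (real n - real tr) / (real tr - t)"
    using D(1) assms(3) by (simp add: of_nat_diff)
  also have "\<dots> = (real tr * real tr - real n * t) / (real tr - t)"
    using D(2) by (simp add: field_simps)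
  also have "\<dots> \<le> real a"
    using key D(2) by (simp add: divide_le_eq mult.commute)
  finally show ?thesis .
qed

lemma broadcast_threshold_count:
  fixes K NB :: "nat set" and N :: "nat \<Rightarrow> nat set"
  assumes K: "K \<subseteq> {1..n}" "tr \<le> card K" and N: "\<forall>k\<in>K. N k \<subseteq> {1..n} \<and> tr \<le> card (N k)"
    and NB: "NB \<subseteq> {1..n}" and rare: "\<forall>j\<in>{1..n} - NB. card {k\<in>K. j \<in> N k} < ts"
    and "tr \<le> n" "0 < ts" "ts \<le> tr"
  shows "real n - real tr * real (n - tr) / real (tr - ts + 1) \<le> real (card NB)"
proof (rule broadcast_threshold_arith)
  show "card NB \<le> n"
    using NB card_mono[of "{1..n}" NB] by simp
  show "card K * tr \<le> card NB * card K + (n - card NB) * (ts - 1)"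
  proof (rule incidence_count[OF finite_subset[OF K(1)] N NB])
    show "\<forall>j\<in>{1..n} - NB. card {k\<in>K. j \<in> N k} \<le> ts - 1"
    proof
      fix j assume "j \<in> {1..n} - NB"
      then have "card {k\<in>K. j \<in> N k} < ts"
        using rare by blast
      then show "card {k\<in>K. j \<in> N k} \<le> ts - 1"
        by linarith
    qed
  qed simp
qed (use assms in auto)

section \<open>Local state of a node\<close>

definition first_msgs :: "(nat \<times> 'm payload) set \<Rightarrow> 'm set" where
  "first_msgs R = {m. \<exists>j. (j, Inl m) \<in> R}"

text \<open>TLCB call q of a node consists of its TLCR steps 2q and 2q+1; step 1 only provides
  the initial R_1 = {}.\<close>

definition tlcr_payload :: "'m lstate \<Rightarrow> nat \<Rightarrow> 'm payload" where
  "tlcr_payload st s =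
     (if even s then Inl (ins st ! (s div 2 - 1)) else Inr (first_msgs (Rv st (s - 1))))"

definition sent_msgs :: "nat \<Rightarrow> 'm lstate \<Rightarrow> 'm netmsg list" where
  "sent_msgs k st = map (\<lambda>s. (k, tlcr_payload st s, s, Rv st (s - 1))) [2..<Suc (stp st)]"

definition tlcb_result ::
  "nat \<Rightarrow> (nat \<times> 'm payload) set \<Rightarrow> (nat \<times> 'm payload) set \<Rightarrow> 'm set \<times> 'm set" where
  "tlcb_result ts R1 R2 =
     (first_msgs R1 \<union> \<Union>{X. \<exists>j. (j, Inr X) \<in> R2},
      {m. ts \<le> card {j. \<exists>X. (j, Inr X) \<in> R2 \<and> m \<in> X}})"

definition lstate_extends :: "'m lstate \<Rightarrow> 'm lstate \<Rightarrow> bool" where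
  "lstate_extends st st' \<longleftrightarrow> stp st \<le> stp st' \<and> (\<forall>s < stp st. Rv st' s = Rv st s)
     \<and> (\<forall>s. Rv st s \<subseteq> Rv st' s) \<and> prefix (ins st) (ins st') \<and> prefix (outs st) (outs st')"

definition lstate_inv :: "nat \<Rightarrow> nat \<Rightarrow> 'm lstate \<Rightarrow> bool" where
  "lstate_inv tr ts st \<longleftrightarrow> 1 \<le> stp st
    \<and> (\<forall>s > stp st. Rv st s = {})
    \<and> length (ins st) = stp st div 2
    \<and> length (outs st) = (stp st - 2) div 2
    \<and> (odd (stp st) \<longrightarrow> fstR st = first_msgs (Rv st (stp st - 1)))
    \<and> (\<forall>q \<in> {1..length (outs st)}. outs st ! (q - 1) = tlcb_result ts (Rv st (2*q)) (Rv st (2*q+1)))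
    \<and> (\<forall>s. 2 \<le> s \<longrightarrow> s < stp st \<longrightarrow> tr \<le> card (Rv st s))
    \<and> card (Rv st (stp st)) < tr
    \<and> (\<forall>s. finite (Rv st s))"

lemma prefix_nth: "prefix xs ys \<Longrightarrow> i < length xs \<Longrightarrow> ys ! i = xs ! i"
  by (auto elim!: prefixE simp: nth_append)

lemma lstate_extends_refl: "lstate_extends st st"
  by (simp add: lstate_extends_def)

lemma lstate_extends_trans:
  "lstate_extends st1 st2 \<Longrightarrow> lstate_extends st2 st3 \<Longrightarrow> lstate_extends st1 st3"
  unfolding lstate_extends_def
  by (metis (no_types, lifting) dual_order.trans order_less_le_trans prefix_order.trans)

lemma tlcr_payload_extends:
  assumes "lstate_extends st st'" "length (ins st) = stp st div 2" "2 \<le> s" "s \<le> stp st"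
  shows "tlcr_payload st' s = tlcr_payload st s"
proof -
  have "ins st' ! (s div 2 - 1) = ins st ! (s div 2 - 1)" if "even s"
    using assms that by (intro prefix_nth) (auto simp: lstate_extends_def)
  moreover have "Rv st' (s - 1) = Rv st (s - 1)"
    using assms by (auto simp: lstate_extends_def)
  ultimately show ?thesis by (simp add: tlcr_payload_def)
qed

lemma sent_msgs_extends:
  assumes "lstate_extends st st'" "length (ins st) = stp st div 2" "stp st' = stp st"
  shows "sent_msgs k st' = sent_msgs k st"
  using assms unfolding sent_msgs_def
  by (auto intro!: map_cong tlcr_payload_extends simp: lstate_extends_def)

lemma sent_msgs_extends_Suc:
  assumes "lstate_extends st st'" "length (ins st) = stp st div 2"
    and "stp st' = Suc (stp st)" "1 \<le> stp st"
  shows "sent_msgs k st' = sent_msgs k st @ [(k, tlcr_payload st' (stp st'), stp st', Rv st' (stp st))]"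
proof -
  have "map (\<lambda>s. (k, tlcr_payload st' s, s, Rv st' (s - 1))) [2..<Suc (stp st)]
      = sent_msgs k st"
    using assms unfolding sent_msgs_def
    by (auto intro!: map_cong tlcr_payload_extends simp: lstate_extends_def)
  then show ?thesis
    using assms(3,4) by (simp add: sent_msgs_def)
qed

lemma length_sent_msgs [simp]: "length (sent_msgs k st) = stp st - 1"
  by (simp add: sent_msgs_def del: upt_Suc)

lemma nth_sent_msgs:
  "d < stp st - 1 \<Longrightarrow> sent_msgs k st ! d = (k, tlcr_payload st (d + 2), d + 2, Rv st (d + 1))"
  by (simp add: sent_msgs_def nth_upt del: upt_Suc)

lemma lstate_inv_outs:
  assumes "lstate_inv tr ts st" "1 \<le> q" "q \<le> length (outs st)"
  shows "outs st ! (q - 1) = tlcb_result ts (Rv st (2*q)) (Rv st (2*q+1)) \<and> 2*q+1 < stp st"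
proof -
  have "length (outs st) = (stp st - 2) div 2"
    "\<forall>q \<in> {1..length (outs st)}. outs st ! (q - 1) = tlcb_result ts (Rv st (2*q)) (Rv st (2*q+1))"
    using assms(1) unfolding lstate_inv_def by blast+
  then show ?thesis
    using assms(2,3) by auto
qed

lemma tlcr_recv_eq:
  assumes "s' \<le> Suc (stp st)"
  shows "tlcr_recv (j, p, s', R') st = st\<lparr>Rv := (Rv st)(stp st :=
     if s' = stp st then insert (j, p) (Rv st (stp st))
     else if s' = Suc (stp st) then Rv st (stp st) \<union> R' else Rv st (stp st))\<rparr>"
  using assms by (auto simp: tlcr_recv_def Let_def)

lemma tlcb_after_waiting:
  "card (Rv st (stp st)) < tr \<Longrightarrow> tlcb_after tr ts app i st = (st, None)"
  by (simp add: tlcb_after_def Let_def)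

lemma tlcb_after_first_step:
  "\<not> card (Rv st (stp st)) < tr \<Longrightarrow> even (stp st) \<Longrightarrow> tlcb_after tr ts app i st =
    (st\<lparr>fstR := first_msgs (Rv st (stp st)), Rv := (Rv st)(Suc (stp st) := {}), stp := Suc (stp st)\<rparr>,
     Some (i, Inr (first_msgs (Rv st (stp st))), Suc (stp st), Rv st (stp st)))"
  by (simp add: tlcb_after_def Let_def tlcr_start_def first_msgs_def)

lemma tlcb_after_second_step:
  "\<not> card (Rv st (stp st)) < tr \<Longrightarrow> odd (stp st) \<Longrightarrow> tlcb_after tr ts app i st =
    (let outs' = outs st @ [(fstR st \<union> \<Union>{X. \<exists>j. (j, Inr X) \<in> Rv st (stp st)},
                  {m. ts \<le> card {j. \<exists>X. (j, Inr X) \<in> Rv st (stp st) \<and> m \<in> X}})];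
         m = app i outs' in
    (st\<lparr>outs := outs', ins := ins st @ [m], Rv := (Rv st)(Suc (stp st) := {}), stp := Suc (stp st)\<rparr>,
     Some (i, Inl m, Suc (stp st), Rv st (stp st))))"
  by (simp add: tlcb_after_def Let_def tlcr_start_def tlcb_call_def)

lemma lstate_inv_init: "0 < tr \<Longrightarrow> lstate_inv tr ts init_lstate"
  by (simp add: lstate_inv_def init_lstate_def first_msgs_def)

lemma lstate_inv_tlcb_call:
  assumes inv: "lstate_inv tr ts st" and "stp st = 1"
    and call: "tlcb_call app i st = (st', msg)"
  shows "lstate_inv tr ts st' \<and> lstate_extends st st' \<and> stp st' = 2 \<and> Rv st' = Rv st
    \<and> msg = (i, tlcr_payload st' 2, 2, Rv st' 1)"
proof -
  have "Rv st 2 = {}" "ins st = []" "outs st = []"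
    using inv \<open>stp st = 1\<close> by (auto simp: lstate_inv_def)
  moreover have "st' = st\<lparr>ins := [app i (outs st)], Rv := (Rv st)(2 := {}), stp := 2\<rparr>"
    and "msg = (i, Inl (app i (outs st)), 2, Rv st 1)"
    using call \<open>stp st = 1\<close> \<open>ins st = []\<close>
    by (auto simp: tlcb_call_def tlcr_start_def Let_def numeral_2_eq_2)
  moreover have "(Rv st)(2 := {}) = Rv st"
    using \<open>Rv st 2 = {}\<close> by (simp add: fun_upd_idem)
  ultimately show ?thesis
    using inv \<open>stp st = 1\<close> by (auto simp: lstate_inv_def lstate_extends_def tlcr_payload_def)
qed

lemma lstate_inv_advance_first:
  assumes inv: "lstate_inv tr ts st" and "2 \<le> stp st" "even (stp st)"
    and X: "Rv st (stp st) \<subseteq> X" "finite X" "tr \<le> card X"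
  shows "lstate_inv tr ts (st\<lparr>Rv := (Rv st)(stp st := X), fstR := first_msgs X, stp := Suc (stp st)\<rparr>)"
proof -
  have "stp st = 2 * (stp st div 2 - 1) + 2"
    using \<open>2 \<le> stp st\<close> \<open>even (stp st)\<close> by presburger
  then obtain q where q: "stp st = 2*q + 2" ..
  show ?thesis
    using inv X q unfolding lstate_inv_def by (auto simp: less_Suc_eq)
qed

lemma lstate_inv_advance_second:
  assumes inv: "lstate_inv tr ts st" and "2 \<le> stp st" "odd (stp st)"
    and X: "Rv st (stp st) \<subseteq> X" "finite X" "tr \<le> card X"
  shows "lstate_inv tr ts (st\<lparr>Rv := (Rv st)(stp st := X),
    outs := outs st @ [tlcb_result ts (Rv st (stp st - 1)) X], ins := ins st @ [m], stp := Suc (stp st)\<rparr>)"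
proof -
  have "stp st = 2 * (stp st div 2 - 1) + 3"
    using \<open>2 \<le> stp st\<close> \<open>odd (stp st)\<close> by presburger
  then obtain q where q: "stp st = 2*q + 3" ..
  have "length (outs st) = q"
    using inv q by (simp add: lstate_inv_def)
  then show ?thesis
    using inv X q unfolding lstate_inv_def by (auto simp: less_Suc_eq nth_append)
qed

lemma tlcb_after_update:
  assumes inv: "lstate_inv tr ts st" and s2: "2 \<le> stp st"
    and X: "Rv st (stp st) \<subseteq> X" "finite X"
    and after: "tlcb_after tr ts app i (st\<lparr>Rv := (Rv st)(stp st := X)\<rparr>) = (st', om)"
  shows "lstate_inv tr ts st' \<and> lstate_extends st st' \<and> Rv st' = (Rv st)(stp st := X)
    \<and> (if card X < tr then om = None \<and> stp st' = stp st
       else om = Some (i, tlcr_payload st' (stp st'), stp st', X) \<and> stp st' = Suc (stp st))"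
proof -
  have upd: "(Rv st)(stp st := X, Suc (stp st) := {}) = (Rv st)(stp st := X)"
    using inv by (auto simp: lstate_inv_def fun_eq_iff)
  have ext: "lstate_extends st st'" if "stp st \<le> stp st'" "Rv st' = (Rv st)(stp st := X)"
    "prefix (ins st) (ins st')" "prefix (outs st) (outs st')"
    using that X by (auto simp: lstate_extends_def)
  consider "card X < tr" | "\<not> card X < tr" "even (stp st)" | "\<not> card X < tr" "odd (stp st)"
    by blast
  then show ?thesis
  proof cases
    case 1
    then have "st' = st\<lparr>Rv := (Rv st)(stp st := X)\<rparr>" "om = None"
      using after tlcb_after_waiting[where st = "st\<lparr>Rv := (Rv st)(stp st := X)\<rparr>"] by auto
    then show ?thesis
      using inv X 1 ext by (auto simp: lstate_inv_def)
  next
    case 2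
    then have st': "st' = st\<lparr>Rv := (Rv st)(stp st := X), fstR := first_msgs X, stp := Suc (stp st)\<rparr>"
      and "om = Some (i, Inr (first_msgs X), Suc (stp st), X)"
      using after upd tlcb_after_first_step[where st = "st\<lparr>Rv := (Rv st)(stp st := X)\<rparr>"] by auto
    moreover have "tlcr_payload st' (Suc (stp st)) = Inr (first_msgs X)"
      using 2 by (simp add: st' tlcr_payload_def)
    ultimately show ?thesis
      using lstate_inv_advance_first[OF inv s2] 2 X ext by auto
  next
    case 3
    define res where "res = tlcb_result ts (Rv st (stp st - 1)) X"
    have "fstR st = first_msgs (Rv st (stp st - 1))"
      using inv 3 by (simp add: lstate_inv_def)
    then obtain m where st': "st' = st\<lparr>Rv := (Rv st)(stp st := X), outs := outs st @ [res],
        ins := ins st @ [m], stp := Suc (stp st)\<rparr>"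
      and "om = Some (i, Inl m, Suc (stp st), X)"
      using after upd 3 tlcb_after_second_step[where st = "st\<lparr>Rv := (Rv st)(stp st := X)\<rparr>"]
      by (auto simp: Let_def res_def tlcb_result_def)
    moreover have "tlcr_payload st' (Suc (stp st)) = Inl m"
      using inv 3 by (auto simp: st' tlcr_payload_def lstate_inv_def nth_append elim!: oddE)
    ultimately show ?thesis
      using lstate_inv_advance_second[OF inv s2] 3 X ext unfolding res_def by auto
  qed
qed

section \<open>Invariant of reachable configurations\<close>

text \<open>The d-th message (from 0) on a channel is the sender's message for TLCR step d+2. The
  bound dlv c k i \<le> stp (loc c i) - 1 says that no node has received a message for a step
  beyond its current one: a message for the next step carries a complete receive set, so its
  delivery makes the receiver advance at once.\<close>

definition config_inv :: "nat \<Rightarrow> nat \<Rightarrow> nat \<Rightarrow> 'm config \<Rightarrow> bool" where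
  "config_inv n tr ts c \<longleftrightarrow> (\<forall>k. lstate_inv tr ts (loc c k))
    \<and> (\<forall>k\<in>{1..n}. \<forall>i\<in>{1..n}. hist c k i = sent_msgs k (loc c k))
    \<and> (\<forall>k\<in>{1..n}. \<forall>i\<in>{1..n}. dlv c k i \<le> stp (loc c i) - 1 \<and> dlv c k i \<le> stp (loc c k) - 1)
    \<and> (\<forall>i s j p. (j, p) \<in> Rv (loc c i) s \<longrightarrow>
         j \<in> {1..n} \<and> 2 \<le> s \<and> s \<le> stp (loc c j) \<and> p = tlcr_payload (loc c j) s)"

lemma config_inv_lstate_inv: "config_inv n tr ts c \<Longrightarrow> lstate_inv tr ts (loc c k)"
  by (simp add: config_inv_def)

lemma config_inv_hist:
  "config_inv n tr ts c \<Longrightarrow> k \<in> {1..n} \<Longrightarrow> i \<in> {1..n} \<Longrightarrow> hist c k i = sent_msgs k (loc c k)"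
  by (simp add: config_inv_def)

lemma config_inv_dlv:
  "config_inv n tr ts c \<Longrightarrow> k \<in> {1..n} \<Longrightarrow> i \<in> {1..n} \<Longrightarrow>
     dlv c k i \<le> stp (loc c i) - 1 \<and> dlv c k i \<le> stp (loc c k) - 1"
  by (simp add: config_inv_def)

lemma config_inv_Rv:
  "config_inv n tr ts c \<Longrightarrow> (j, p) \<in> Rv (loc c i) s \<Longrightarrow>
     j \<in> {1..n} \<and> 2 \<le> s \<and> s \<le> stp (loc c j) \<and> p = tlcr_payload (loc c j) s"
  unfolding config_inv_def by blast

lemma config_inv_init: "0 < tr \<Longrightarrow> config_inv n tr ts init_config"
  using lstate_inv_init[of tr ts]
  by (simp add: config_inv_def init_config_def sent_msgs_def init_lstate_def)

lemma config_inv_local_update: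
  assumes inv: "config_inv n tr ts c" and loc': "loc c' = (loc c)(i := st')"
    and st': "lstate_inv tr ts st'" "lstate_extends (loc c i) st'"
    and sent': "sent_msgs i st' = sent_msgs i (loc c i) @ ms"
    and hist': "hist c' = (\<lambda>a b. if a = i \<and> b \<in> {1..n} then hist c a b @ ms else hist c a b)"
    and dlv': "\<forall>a\<in>{1..n}. \<forall>b\<in>{1..n}. dlv c' a b \<le> dlv c a b
       \<or> dlv c' a b \<le> stp (loc c' b) - 1 \<and> dlv c' a b \<le> stp (loc c' a) - 1"
    and new: "\<forall>s j p. (j, p) \<in> Rv st' s \<longrightarrow> (j, p) \<notin> Rv (loc c i) s \<longrightarrow>
       j \<in> {1..n} \<and> 2 \<le> s \<and> s \<le> stp (loc c j) \<and> p = tlcr_payload (loc c j) s"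
  shows "config_inv n tr ts c'"
proof -
  have mono: "stp (loc c j) \<le> stp (loc c' j)" for j
    using st'(2) loc' by (auto simp: lstate_extends_def)
  have still: "s \<le> stp (loc c' j) \<and> tlcr_payload (loc c' j) s = tlcr_payload (loc c j) s"
    if "2 \<le> s" "s \<le> stp (loc c j)" for j s
  proof (cases "j = i")
    case True
    have "length (ins (loc c i)) = stp (loc c i) div 2"
      using config_inv_lstate_inv[OF inv] by (simp add: lstate_inv_def)
    then show ?thesis
      using True that st'(2) loc' tlcr_payload_extends[of "loc c i" st' s] by (auto simp: lstate_extends_def)
  qed (use loc' that in auto)
  have "j \<in> {1..n} \<and> 2 \<le> s \<and> s \<le> stp (loc c' j) \<and> p = tlcr_payload (loc c' j) s"
    if "(j, p) \<in> Rv (loc c' i') s" for i' s j p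
  proof -
    have "j \<in> {1..n} \<and> 2 \<le> s \<and> s \<le> stp (loc c j) \<and> p = tlcr_payload (loc c j) s"
    proof (cases "i' = i \<and> (j, p) \<notin> Rv (loc c i) s")
      case True
      then show ?thesis using new that loc' by auto
    next
      case False
      then have "(j, p) \<in> Rv (loc c i') s" using that loc' by (cases "i' = i") auto
      then show ?thesis using config_inv_Rv[OF inv] by blast
    qed
    then show ?thesis using still[of s j] by auto
  qed
  moreover have "dlv c' a b \<le> stp (loc c' b) - 1 \<and> dlv c' a b \<le> stp (loc c' a) - 1"
    if "a \<in> {1..n}" "b \<in> {1..n}" for a b
    using dlv'[rule_format, OF that] config_inv_dlv[OF inv that] mono[of a] mono[of b] by linarith
  moreover have "hist c' a b = sent_msgs a (loc c' a)" if "a \<in> {1..n}" "b \<in> {1..n}" for a b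
    using config_inv_hist[OF inv that] that hist' sent' loc' by auto
  ultimately show ?thesis
    using inv st'(1) loc' unfolding config_inv_def by auto
qed

lemma config_inv_crash:
  assumes inv: "config_inv n tr ts c"
  shows "config_inv n tr ts (crash_act i c)"
proof (rule config_inv_local_update[OF inv, where ms = "[]"])
  let ?st' = "(loc c i)\<lparr>crashed := True\<rparr>"
  show "loc (crash_act i c) = (loc c)(i := ?st')"
    by (simp add: crash_act_def set_loc_def)
  show "sent_msgs i ?st' = sent_msgs i (loc c i) @ []"
    by (simp add: sent_msgs_def tlcr_payload_def)
  show "lstate_inv tr ts ?st'"
    using config_inv_lstate_inv[OF inv] by (simp add: lstate_inv_def)
qed (auto simp: crash_act_def set_loc_def lstate_extends_def fun_eq_iff)

lemma config_inv_start:
  assumes inv: "config_inv n tr ts c" and "stp (loc c i) = 1"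
  shows "config_inv n tr ts (start_act n app i c)"
proof -
  obtain st' msg where call: "tlcb_call app i (loc c i) = (st', msg)"
    by (cases "tlcb_call app i (loc c i)")
  note st' = lstate_inv_tlcb_call[OF config_inv_lstate_inv[OF inv] \<open>stp (loc c i) = 1\<close> call]
  have c': "start_act n app i c = send_all n i msg (set_loc i st' c)"
    by (simp add: start_act_def call)
  have "length (ins (loc c i)) = stp (loc c i) div 2"
    using config_inv_lstate_inv[OF inv] by (simp add: lstate_inv_def)
  then have "sent_msgs i st' = sent_msgs i (loc c i) @ [msg]"
    using sent_msgs_extends_Suc[of "loc c i" st' i] st' \<open>stp (loc c i) = 1\<close> by auto
  moreover have "hist (start_act n app i c) =
      (\<lambda>a b. if a = i \<and> b \<in> {1..n} then hist c a b @ [msg] else hist c a b)"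
    by (simp add: c' send_all_def set_loc_def fun_eq_iff)
  ultimately show ?thesis
    using st' by (intro config_inv_local_update[OF inv]) (auto simp: c' send_all_def set_loc_def)
qed

lemma deliver_act_eq:
  assumes "tlcb_after tr ts app i (tlcr_recv (hist c k i ! dlv c k i) (loc c i)) = (st', om)"
  defines "c1 \<equiv> c\<lparr>dlv := (dlv c)(k := (dlv c k)(i := Suc (dlv c k i)))\<rparr>"
  shows "deliver_act n tr ts app k i c =
    (case om of None \<Rightarrow> set_loc i st' c1 | Some msg \<Rightarrow> send_all n i msg (set_loc i st' c1))"
  using assms(1) unfolding c1_def by (simp add: deliver_act_def Let_def)

lemma deliver_act_loc_dlv:
  assumes "tlcb_after tr ts app i (tlcr_recv (hist c k i ! dlv c k i) (loc c i)) = (st', om)"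
  shows "loc (deliver_act n tr ts app k i c) = (loc c)(i := st')"
    and "dlv (deliver_act n tr ts app k i c) = (dlv c)(k := (dlv c k)(i := Suc (dlv c k i)))"
  using deliver_act_eq[OF assms] by (cases om; simp add: send_all_def set_loc_def)+

lemma deliver_act_hist:
  assumes "tlcb_after tr ts app i (tlcr_recv (hist c k i ! dlv c k i) (loc c i)) = (st', om)"
  shows "hist (deliver_act n tr ts app k i c) =
    (\<lambda>a b. if a = i \<and> b \<in> {1..n} then hist c a b @ (case om of None \<Rightarrow> [] | Some msg \<Rightarrow> [msg])
      else hist c a b)"
  using deliver_act_eq[OF assms] by (cases om) (simp_all add: send_all_def set_loc_def fun_eq_iff)

lemma tlcr_recv_next_msg:
  assumes inv: "config_inv n tr ts c" and k: "k \<in> {1..n}" and i: "i \<in> {1..n}"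
    and "dlv c k i < length (hist c k i)"
  defines "s \<equiv> stp (loc c i)" and "d \<equiv> dlv c k i"
  shows "tlcr_recv (hist c k i ! d) (loc c i) = (loc c i)\<lparr>Rv := (Rv (loc c i))(s :=
      if d + 2 = s then insert (k, tlcr_payload (loc c k) s) (Rv (loc c i) s)
      else if d + 2 = Suc s then Rv (loc c i) s \<union> Rv (loc c k) s else Rv (loc c i) s)\<rparr>"
proof -
  have "d < stp (loc c k) - 1"
    using assms(4) config_inv_hist[OF inv k i] by (simp add: d_def)
  then have "hist c k i ! d = (k, tlcr_payload (loc c k) (d + 2), d + 2, Rv (loc c k) (d + 1))"
    using config_inv_hist[OF inv k i] nth_sent_msgs by simp
  moreover have "d \<le> s - 1" "1 \<le> s"
    using config_inv_dlv[OF inv k i] config_inv_lstate_inv[OF inv, of i]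
    by (simp_all add: d_def s_def lstate_inv_def)
  ultimately show ?thesis
    by (auto simp: tlcr_recv_eq s_def)
qed

lemma deliver_lstate:
  assumes inv: "config_inv n tr ts c" and i: "i \<in> {1..n}" and k: "k \<in> {1..n}"
    and s2: "2 \<le> stp (loc c i)" and dl: "dlv c k i < length (hist c k i)"
    and after: "tlcb_after tr ts app i (tlcr_recv (hist c k i ! dlv c k i) (loc c i)) = (st', om)"
  defines "s \<equiv> stp (loc c i)" and "d \<equiv> dlv c k i"
  obtains X where "lstate_inv tr ts st'" "lstate_extends (loc c i) st'"
    "Rv st' = (Rv (loc c i))(s := X)"
    "\<forall>e \<in> X - Rv (loc c i) s. e = (k, tlcr_payload (loc c k) s) \<and> d + 2 = s \<or> e \<in> Rv (loc c k) s"
    "d + 2 = s \<Longrightarrow> (k, tlcr_payload (loc c k) s) \<in> X"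
    "om = None \<and> stp st' = s \<or> om = Some (i, tlcr_payload st' (stp st'), stp st', X) \<and> stp st' = Suc s"
    "d + 2 \<le> stp st'"
proof -
  define X where "X = (if d + 2 = s then insert (k, tlcr_payload (loc c k) s) (Rv (loc c i) s)
    else if d + 2 = Suc s then Rv (loc c i) s \<union> Rv (loc c k) s else Rv (loc c i) s)"
  have inv_i: "lstate_inv tr ts (loc c i)" and inv_k: "lstate_inv tr ts (loc c k)"
    using config_inv_lstate_inv[OF inv] by auto
  have fin: "finite X" and sub: "Rv (loc c i) s \<subseteq> X"
    using inv_i inv_k by (auto simp: X_def lstate_inv_def)
  have "d + 1 < stp (loc c k)" "d \<le> s - 1"
    using dl config_inv_hist[OF inv k i] config_inv_dlv[OF inv k i] by (auto simp: d_def s_def)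
  have big: "tr \<le> card X" if "d + 2 = Suc s"
  proof -
    have "tr \<le> card (Rv (loc c k) s)"
      using inv_k that \<open>d + 1 < stp (loc c k)\<close> s2 by (auto simp: lstate_inv_def s_def)
    also have "\<dots> \<le> card X"
      using fin that by (intro card_mono) (auto simp: X_def)
    finally show ?thesis .
  qed
  have "tlcr_recv (hist c k i ! dlv c k i) (loc c i) = (loc c i)\<lparr>Rv := (Rv (loc c i))(s := X)\<rparr>"
    using tlcr_recv_next_msg[OF inv k i dl] unfolding X_def s_def d_def .
  note upd = tlcb_after_update[OF inv_i s2 sub[unfolded s_def] fin after[unfolded this s_def], folded s_def]
  have "om = None \<and> stp st' = s \<or> om = Some (i, tlcr_payload st' (stp st'), stp st', X) \<and> stp st' = Suc s"
    using upd by (auto split: if_split_asm)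
  moreover have "d + 2 \<le> stp st'"
  proof (cases "d + 2 = Suc s")
    case True
    then show ?thesis
      using upd big by simp
  next
    case False
    then show ?thesis
      using \<open>d \<le> s - 1\<close> s2 calculation unfolding s_def by linarith
  qed
  moreover have "\<forall>e \<in> X - Rv (loc c i) s. e = (k, tlcr_payload (loc c k) s) \<and> d + 2 = s
      \<or> e \<in> Rv (loc c k) s"
    by (auto simp: X_def)
  moreover have "d + 2 = s \<Longrightarrow> (k, tlcr_payload (loc c k) s) \<in> X"
    by (simp add: X_def)
  ultimately show ?thesis
    using that upd by blast
qed

lemma deliver_sent_msgs:
  assumes inv: "config_inv n tr ts c" and "2 \<le> stp (loc c i)" and ext: "lstate_extends (loc c i) st'"
    and "Rv st' = (Rv (loc c i))(stp (loc c i) := X)"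
    and om: "om = None \<and> stp st' = stp (loc c i)
      \<or> om = Some (i, tlcr_payload st' (stp st'), stp st', X) \<and> stp st' = Suc (stp (loc c i))"
  shows "sent_msgs i st' = sent_msgs i (loc c i) @ (case om of None \<Rightarrow> [] | Some msg \<Rightarrow> [msg])"
proof -
  have ins_i: "length (ins (loc c i)) = stp (loc c i) div 2"
    using config_inv_lstate_inv[OF inv] by (simp add: lstate_inv_def)
  show ?thesis
  proof (cases om)
    case None
    then show ?thesis
      using om sent_msgs_extends[OF ext ins_i] by simp
  next
    case (Some msg)
    then show ?thesis
      using om assms(2,4) sent_msgs_extends_Suc[OF ext ins_i] by auto
  qed
qed

lemma config_inv_deliver:
  assumes inv: "config_inv n tr ts c" and i: "i \<in> {1..n}" and k: "k \<in> {1..n}"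
    and s2: "2 \<le> stp (loc c i)" and dl: "dlv c k i < length (hist c k i)"
  shows "config_inv n tr ts (deliver_act n tr ts app k i c)"
proof -
  define s where "s = stp (loc c i)"
  obtain st' om where after: "tlcb_after tr ts app i (tlcr_recv (hist c k i ! dlv c k i) (loc c i)) = (st', om)"
    by (cases "tlcb_after tr ts app i (tlcr_recv (hist c k i ! dlv c k i) (loc c i))")
  obtain X where st': "lstate_inv tr ts st'" "lstate_extends (loc c i) st'"
    and Rv': "Rv st' = (Rv (loc c i))(s := X)"
    and new: "\<forall>e \<in> X - Rv (loc c i) s. e = (k, tlcr_payload (loc c k) s) \<and> dlv c k i + 2 = s
       \<or> e \<in> Rv (loc c k) s"
    and om: "om = None \<and> stp st' = s \<or> om = Some (i, tlcr_payload st' (stp st'), stp st', X) \<and> stp st' = Suc s"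
    and adv: "dlv c k i + 2 \<le> stp st'"
    using deliver_lstate[OF inv i k s2 dl after] unfolding s_def by metis
  have dk: "dlv c k i + 2 \<le> stp (loc c k)"
    using dl config_inv_hist[OF inv k i] by simp
  note loc' = deliver_act_loc_dlv(1)[OF after]
  show ?thesis
  proof (rule config_inv_local_update[OF inv loc' st'
        deliver_sent_msgs[OF inv s2 st'(2) Rv'[unfolded s_def] om[unfolded s_def]] deliver_act_hist[OF after]])
    show "\<forall>a\<in>{1..n}. \<forall>b\<in>{1..n}. dlv (deliver_act n tr ts app k i c) a b \<le> dlv c a b
      \<or> dlv (deliver_act n tr ts app k i c) a b \<le> stp (loc (deliver_act n tr ts app k i c) b) - 1
        \<and> dlv (deliver_act n tr ts app k i c) a b \<le> stp (loc (deliver_act n tr ts app k i c) a) - 1"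
      using deliver_act_loc_dlv(2)[OF after] loc' adv dk st'(2) by (auto simp: lstate_extends_def)
    show "\<forall>s' j p. (j, p) \<in> Rv st' s' \<longrightarrow> (j, p) \<notin> Rv (loc c i) s' \<longrightarrow>
       j \<in> {1..n} \<and> 2 \<le> s' \<and> s' \<le> stp (loc c j) \<and> p = tlcr_payload (loc c j) s'"
    proof (intro allI impI)
      fix s' j p assume e: "(j, p) \<in> Rv st' s'" "(j, p) \<notin> Rv (loc c i) s'"
      then have "s' = s"
        using Rv' by (cases "s' = s") auto
      then have "(j, p) = (k, tlcr_payload (loc c k) s) \<and> dlv c k i + 2 = s \<or> (j, p) \<in> Rv (loc c k) s"
        using new e Rv' by auto
      then show "j \<in> {1..n} \<and> 2 \<le> s' \<and> s' \<le> stp (loc c j) \<and> p = tlcr_payload (loc c j) s'"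
        using \<open>s' = s\<close> k dk s2 config_inv_Rv[OF inv] by (auto simp: s_def)
    qed
  qed
qed

lemma tlcb_step_cases:
  assumes "tlcb_step n tr ts app c c'"
  obtains (stutter) "c' = c"
    | (crash) i where "c' = crash_act i c"
    | (start) i where "i \<in> {1..n}" "stp (loc c i) = 1" "c' = start_act n app i c"
    | (deliver) i k where "i \<in> {1..n}" "k \<in> {1..n}" "2 \<le> stp (loc c i)" "dlv c k i < length (hist c k i)"
        "c' = deliver_act n tr ts app k i c"
  using assms unfolding tlcb_step_def by blast

lemma config_inv_tlcb_step:
  "config_inv n tr ts c \<Longrightarrow> tlcb_step n tr ts app c c' \<Longrightarrow> config_inv n tr ts c'"
  by (erule tlcb_step_cases) (auto intro: config_inv_crash config_inv_start config_inv_deliver)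

lemma tlcb_step_extends:
  assumes inv: "config_inv n tr ts c" and "tlcb_step n tr ts app c c'"
  shows "lstate_extends (loc c j) (loc c' j)"
  using assms(2)
proof (cases rule: tlcb_step_cases)
  case (crash i)
  then show ?thesis
    by (auto simp: crash_act_def set_loc_def lstate_extends_def)
next
  case (start i)
  obtain st' msg where call: "tlcb_call app i (loc c i) = (st', msg)"
    by (cases "tlcb_call app i (loc c i)")
  then have "lstate_extends (loc c i) st'"
    using lstate_inv_tlcb_call[OF config_inv_lstate_inv[OF inv] \<open>stp (loc c i) = 1\<close>] by blast
  then show ?thesis
    using start call by (auto simp: start_act_def send_all_def set_loc_def lstate_extends_refl)
next
  case (deliver i k)
  obtain st' om where after: "tlcb_after tr ts app i (tlcr_recv (hist c k i ! dlv c k i) (loc c i)) = (st', om)"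
    by (cases "tlcb_after tr ts app i (tlcr_recv (hist c k i ! dlv c k i) (loc c i))")
  then have "lstate_extends (loc c i) st'"
    using deliver_lstate[OF inv deliver(1-4)] by blast
  then show ?thesis
    using deliver_act_loc_dlv(1)[OF after] deliver(5) by (auto simp: lstate_extends_refl)
qed (simp add: lstate_extends_refl)

lemma tlcb_step_dlv:
  assumes inv: "config_inv n tr ts c" and "tlcb_step n tr ts app c c'"
  shows "dlv c' a b = dlv c a b \<or> dlv c' a b = Suc (dlv c a b) \<and> dlv c a b < length (hist c a b)
    \<and> (dlv c a b + 2 = stp (loc c b) \<longrightarrow> (a, tlcr_payload (loc c a) (stp (loc c b))) \<in> Rv (loc c' b) (stp (loc c b)))"
  using assms(2)
proof (cases rule: tlcb_step_cases)
  case (crash i)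
  then show ?thesis
    by (simp add: crash_act_def set_loc_def)
next
  case (start i)
  then show ?thesis
    by (simp add: start_act_def send_all_def set_loc_def split: prod.split)
next
  case (deliver i k)
  obtain st' om where after: "tlcb_after tr ts app i (tlcr_recv (hist c k i ! dlv c k i) (loc c i)) = (st', om)"
    by (cases "tlcb_after tr ts app i (tlcr_recv (hist c k i ! dlv c k i) (loc c i))")
  obtain X where "Rv st' = (Rv (loc c i))(stp (loc c i) := X)"
    "dlv c k i + 2 = stp (loc c i) \<Longrightarrow> (k, tlcr_payload (loc c k) (stp (loc c i))) \<in> X"
    using deliver_lstate[OF inv deliver(1-4) after] by metis
  then show ?thesis
    using deliver_act_loc_dlv[OF after] deliver by auto
qed simp

section \<open>Receive sets\<close>

lemma senders_inj_on:
  assumes "config_inv n tr ts c"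
  shows "inj_on fst (Rv (loc c i) s)"
  using config_inv_Rv[OF assms] by (intro inj_onI) (metis prod.collapse)

lemma senders_subset:
  assumes "config_inv n tr ts c"
  shows "fst ` Rv (loc c i) s \<subseteq> {1..n}"
  using config_inv_Rv[OF assms] by fastforce

lemma tr_le_card_senders:
  assumes "config_inv n tr ts c" "2 \<le> s" "s < stp (loc c i)"
  shows "tr \<le> card (fst ` Rv (loc c i) s)"
proof -
  have "tr \<le> card (Rv (loc c i) s)"
    using assms config_inv_lstate_inv[OF assms(1), of i] unfolding lstate_inv_def by blast
  then show ?thesis
    using card_image[OF senders_inj_on[OF assms(1)]] by simp
qed

lemma first_step_entry:
  assumes "config_inv n tr ts c" "(j, p) \<in> Rv (loc c i) (2*s)"
  shows "1 \<le> s \<and> s \<le> length (ins (loc c j)) \<and> p = Inl (ins (loc c j) ! (s - 1))"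
proof -
  have "2 \<le> 2*s" "2*s \<le> stp (loc c j)" "p = tlcr_payload (loc c j) (2*s)"
    using config_inv_Rv[OF assms] by auto
  moreover have "length (ins (loc c j)) = stp (loc c j) div 2"
    using config_inv_lstate_inv[OF assms(1), of j] by (simp add: lstate_inv_def)
  ultimately show ?thesis
    by (simp add: tlcr_payload_def)
qed

lemma second_step_entry:
  assumes "config_inv n tr ts c" "(k, p) \<in> Rv (loc c i) (2*s+1)"
  shows "p = Inr (first_msgs (Rv (loc c k) (2*s))) \<and> 2*s < stp (loc c k) \<and> 1 \<le> s"
proof -
  have "2 \<le> 2*s+1" "2*s+1 \<le> stp (loc c k)" "p = tlcr_payload (loc c k) (2*s+1)"
    using config_inv_Rv[OF assms] by auto
  then show ?thesis
    by (simp add: tlcr_payload_def)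
qed

lemma tlcb_result_forwarded:
  fixes i s :: nat
  assumes "config_inv n tr ts c"
  defines "K \<equiv> fst ` Rv (loc c i) (2*s+1)" and "X \<equiv> \<lambda>k. first_msgs (Rv (loc c k) (2*s))"
  shows "tlcb_result ts (Rv (loc c i) (2*s)) (Rv (loc c i) (2*s+1))
    = (X i \<union> (\<Union>k\<in>K. X k), {m. ts \<le> card {k\<in>K. m \<in> X k}})"
proof -
  have "\<Union>{X. \<exists>j. (j, Inr X) \<in> Rv (loc c i) (2*s+1)} = (\<Union>k\<in>K. X k)"
    and "{j. \<exists>Y. (j, Inr Y) \<in> Rv (loc c i) (2*s+1) \<and> m \<in> Y} = {k\<in>K. m \<in> X k}" for m
    using second_step_entry[OF assms(1)] unfolding K_def X_def by force+
  then show ?thesis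
    unfolding tlcb_result_def X_def by simp
qed

lemma card_votes_lt:
  assumes "finite K" "0 < ts" "\<forall>k\<in>K. \<forall>j'\<in>N k. \<exists>m. broadcast_in c j' s m"
    and "\<forall>m. broadcast_in c j s m \<longrightarrow> card {k\<in>K. m \<in> msgs_of c (N k) s} < ts"
  shows "card {k\<in>K. j \<in> N k} < ts"
proof (cases "\<exists>k\<in>K. j \<in> N k")
  case True
  then obtain m where "broadcast_in c j s m"
    using assms(3) by blast
  then have "{k\<in>K. j \<in> N k} \<subseteq> {k\<in>K. m \<in> msgs_of c (N k) s}"
    unfolding msgs_of_def by blast
  then have "card {k\<in>K. j \<in> N k} \<le> card {k\<in>K. m \<in> msgs_of c (N k) s}"
    using assms(1) by (intro card_mono) auto
  then show ?thesis
    using assms(4) \<open>broadcast_in c j s m\<close> by (meson le_less_trans)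
next
  case False
  then have "{k\<in>K. j \<in> N k} = {}"
    by blast
  then show ?thesis
    using assms(2) by (simp only: card.empty)
qed

section \<open>Executions\<close>

locale tlcb_run =
  fixes n tr ts :: nat and app :: "'m app" and c :: "nat \<Rightarrow> 'm config"
  assumes execution: "tlcb_execution n tr ts app c" and tr_pos: "0 < tr"
begin

lemma tlcb_step_at: "tlcb_step n tr ts app (c t) (c (Suc t))"
  using execution by (simp add: tlcb_execution_def)

lemma config_inv_at: "config_inv n tr ts (c t)"
proof (induction t)
  case 0
  then show ?case
    using execution config_inv_init[OF tr_pos] by (simp add: tlcb_execution_def)
next
  case (Suc t)
  then show ?case
    using config_inv_tlcb_step tlcb_step_at by blast
qed

lemma loc_extends: "t \<le> t' \<Longrightarrow> lstate_extends (loc (c t) j) (loc (c t') j)"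
proof (induction t' rule: dec_induct)
  case (step m)
  then show ?case
    using tlcb_step_extends[OF config_inv_at tlcb_step_at] lstate_extends_trans by blast
qed (rule lstate_extends_refl)

lemma dlv_mono: "t \<le> t' \<Longrightarrow> dlv (c t) a b \<le> dlv (c t') a b"
proof (induction t' rule: dec_induct)
  case (step m)
  then show ?case
    using tlcb_step_dlv[OF config_inv_at tlcb_step_at, of m a b] by auto
qed simp

lemma broadcast_in_iff:
  assumes "1 \<le> s" "s \<le> length (ins (loc (c t) j))"
  shows "broadcast_in c j s m \<longleftrightarrow> m = ins (loc (c t) j) ! (s - 1)"
proof -
  have "ins (loc (c t') j) ! (s - 1) = ins (loc (c t) j) ! (s - 1)"
    if "s \<le> length (ins (loc (c t') j))" for t'
  proof (cases "t \<le> t'")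
    case True
    then show ?thesis
      using loc_extends[OF True, of j] assms by (auto simp: lstate_extends_def intro: prefix_nth)
  next
    case False
    then have pre: "prefix (ins (loc (c t') j)) (ins (loc (c t) j))"
      using loc_extends[of t' t j] by (simp add: lstate_extends_def)
    show ?thesis
      using prefix_nth[OF pre, of "s - 1"] that assms(1) by simp
  qed
  then show ?thesis
    using assms unfolding broadcast_in_def by metis
qed

lemma broadcast_in_unique:
  assumes "1 \<le> s" "broadcast_in c j s m" "broadcast_in c j s m'"
  shows "m = m'"
proof -
  obtain t where t: "s \<le> length (ins (loc (c t) j))" "ins (loc (c t) j) ! (s - 1) = m"
    using assms(2) unfolding broadcast_in_def by blast
  have "m' = ins (loc (c t) j) ! (s - 1)"
    using broadcast_in_iff[OF assms(1) t(1)] assms(3) by blast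
  then show ?thesis
    using t(2) by simp
qed

lemma first_step_entry_broadcast:
  assumes "(j, p) \<in> Rv (loc (c t) x) (2*s)"
  shows "broadcast_in c j s m \<longleftrightarrow> p = Inl m"
proof -
  have e: "1 \<le> s" "s \<le> length (ins (loc (c t) j))" "p = Inl (ins (loc (c t) j) ! (s - 1))"
    using first_step_entry[OF config_inv_at assms] by auto
  show ?thesis
    using broadcast_in_iff[OF e(1,2)] e(3) by auto
qed

lemma first_msgs_eq_msgs_of:
  "first_msgs (Rv (loc (c t) x) (2*s)) = msgs_of c (fst ` Rv (loc (c t) x) (2*s)) s"
proof (rule set_eqI)
  fix m
  show "m \<in> first_msgs (Rv (loc (c t) x) (2*s)) \<longleftrightarrow> m \<in> msgs_of c (fst ` Rv (loc (c t) x) (2*s)) s"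
  proof
    assume "m \<in> first_msgs (Rv (loc (c t) x) (2*s))"
    then obtain j where "(j, Inl m) \<in> Rv (loc (c t) x) (2*s)"
      by (auto simp: first_msgs_def)
    then show "m \<in> msgs_of c (fst ` Rv (loc (c t) x) (2*s)) s"
      using first_step_entry_broadcast unfolding msgs_of_def by force
  next
    assume "m \<in> msgs_of c (fst ` Rv (loc (c t) x) (2*s)) s"
    then obtain j p where jp: "(j, p) \<in> Rv (loc (c t) x) (2*s)" "broadcast_in c j s m"
      unfolding msgs_of_def by auto
    then have "p = Inl m"
      using first_step_entry_broadcast by blast
    then show "m \<in> first_msgs (Rv (loc (c t) x) (2*s))"
      using jp(1) unfolding first_msgs_def by blast
  qed
qed

lemma first_step_sender_broadcasts:
  assumes "j \<in> fst ` Rv (loc (c t) x) (2*s)"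
  shows "\<exists>m. broadcast_in c j s m"
proof -
  obtain p where jp: "(j, p) \<in> Rv (loc (c t) x) (2*s)"
    using assms by auto
  then obtain m where "p = Inl m"
    using first_step_entry[OF config_inv_at jp] by blast
  then show ?thesis
    using first_step_entry_broadcast[OF jp] by blast
qed

lemma returns_at_tlcb_result:
  assumes "returns_at c i s R B" "1 \<le> s"
  obtains t0 where "\<And>t. t0 \<le> t \<Longrightarrow>
    (R, B) = tlcb_result ts (Rv (loc (c t) i) (2*s)) (Rv (loc (c t) i) (2*s+1)) \<and> 2*s+1 < stp (loc (c t) i)"
proof -
  obtain t0 where t0: "s \<le> length (outs (loc (c t0) i))" "outs (loc (c t0) i) ! (s - 1) = (R, B)"
    using assms(1) unfolding returns_at_def by blast
  have "(R, B) = tlcb_result ts (Rv (loc (c t) i) (2*s)) (Rv (loc (c t) i) (2*s+1)) \<and> 2*s+1 < stp (loc (c t) i)"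
    if "t0 \<le> t" for t
  proof -
    have pre: "prefix (outs (loc (c t0) i)) (outs (loc (c t) i))"
      using loc_extends[OF that] by (simp add: lstate_extends_def)
    have len: "s \<le> length (outs (loc (c t) i))"
      using prefix_length_le[OF pre] t0(1) by linarith
    have "outs (loc (c t) i) ! (s - 1) = (R, B)"
      using prefix_nth[OF pre, of "s - 1"] t0 assms(2) by simp
    then show ?thesis
      using lstate_inv_outs[OF config_inv_lstate_inv[OF config_inv_at] assms(2) len] by simp
  qed
  then show ?thesis
    using that by blast
qed

lemma returns_at_if_stp:
  assumes "2*s+2 \<le> stp (loc (c t) i)"
  shows "\<exists>R B. returns_at c i s R B"
proof -
  have "s \<le> length (outs (loc (c t) i))"
    using assms config_inv_lstate_inv[OF config_inv_at, of t i] by (simp add: lstate_inv_def)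
  then have "returns_at c i s (fst (outs (loc (c t) i) ! (s - 1))) (snd (outs (loc (c t) i) ! (s - 1)))"
    unfolding returns_at_def by auto
  then show ?thesis
    by blast
qed

lemma receive_threshold:
  assumes "returns_at c i s R B" "1 \<le> s"
  shows "threshold_set n c s tr R"
proof -
  obtain t where res: "(R, B) = tlcb_result ts (Rv (loc (c t) i) (2*s)) (Rv (loc (c t) i) (2*s+1))"
    "2*s+1 < stp (loc (c t) i)"
    using returns_at_tlcb_result[OF assms] by blast
  define N where "N k = fst ` Rv (loc (c t) k) (2*s)" for k
  define K where "K = fst ` Rv (loc (c t) i) (2*s+1)"
  define Ns where "Ns = N i \<union> (\<Union>k\<in>K. N k)"
  have "R = msgs_of c (N i) s \<union> (\<Union>k\<in>K. msgs_of c (N k) s)"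
    using res(1) unfolding tlcb_result_forwarded[OF config_inv_at] first_msgs_eq_msgs_of
    by (simp add: N_def K_def)
  also have "\<dots> = msgs_of c Ns s"
    unfolding Ns_def msgs_of_def by blast
  finally have "R = msgs_of c Ns s" .
  moreover have "Ns \<subseteq> {1..n}"
    using senders_subset[OF config_inv_at] unfolding Ns_def N_def by blast
  moreover have "\<forall>j\<in>Ns. \<exists>m. broadcast_in c j s m"
    using first_step_sender_broadcasts unfolding Ns_def N_def by blast
  moreover have "tr \<le> card Ns"
  proof -
    have "tr \<le> card (N i)"
      unfolding N_def using tr_le_card_senders[OF config_inv_at] res(2) assms(2) by simp
    also have "\<dots> \<le> card Ns"
      using \<open>Ns \<subseteq> {1..n}\<close> by (intro card_mono) (auto intro: finite_subset simp: Ns_def)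
    finally show ?thesis .
  qed
  ultimately show ?thesis
    unfolding threshold_set_def by blast
qed

lemma full_spread:
  assumes "n < tr + ts" "1 \<le> s" "returns_at c i s R B" "m \<in> B" "returns_at c j s R' B'"
  shows "m \<in> R'"
proof -
  obtain ti where resi: "\<And>t. ti \<le> t \<Longrightarrow>
      (R, B) = tlcb_result ts (Rv (loc (c t) i) (2*s)) (Rv (loc (c t) i) (2*s+1))
      \<and> 2*s+1 < stp (loc (c t) i)"
    using returns_at_tlcb_result[OF assms(3,2)] by blast
  obtain tj where resj: "\<And>t. tj \<le> t \<Longrightarrow>
      (R', B') = tlcb_result ts (Rv (loc (c t) j) (2*s)) (Rv (loc (c t) j) (2*s+1))
      \<and> 2*s+1 < stp (loc (c t) j)"
    using returns_at_tlcb_result[OF assms(5,2)] by blast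
  define t where "t = max ti tj"
  define X where "X k = first_msgs (Rv (loc (c t) k) (2*s))" for k
  define Ki where "Ki = fst ` Rv (loc (c t) i) (2*s+1)"
  define Kj where "Kj = fst ` Rv (loc (c t) j) (2*s+1)"
  have B: "B = {m. ts \<le> card {k\<in>Ki. m \<in> X k}}"
    using conjunct1[OF resi[of t]] unfolding tlcb_result_forwarded[OF config_inv_at]
    by (simp add: t_def X_def Ki_def)
  have R': "R' = X j \<union> (\<Union>k\<in>Kj. X k)" and stp_j: "2*s+1 < stp (loc (c t) j)"
    using resj[of t] unfolding tlcb_result_forwarded[OF config_inv_at] by (simp_all add: t_def X_def Kj_def)
  have "tr \<le> card Kj"
    unfolding Kj_def using tr_le_card_senders[OF config_inv_at _ stp_j] assms(2) by simp
  moreover have "ts \<le> card {k\<in>Ki. m \<in> X k}"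
    using assms(4) B by simp
  moreover have "{k\<in>Ki. m \<in> X k} \<subseteq> {1..n}" "Kj \<subseteq> {1..n}"
    using senders_subset[OF config_inv_at] unfolding Ki_def Kj_def by blast+
  ultimately have "{k\<in>Ki. m \<in> X k} \<inter> Kj \<noteq> {}"
    using assms(1) by (intro Int_nonempty_if_card_gt[of "{1..n}"]) auto
  then show ?thesis
    using R' by blast
qed

lemma msgs_of_broadcasters:
  assumes "1 \<le> s" "B \<subseteq> msgs_of c {1..n} s"
  shows "msgs_of c {j\<in>{1..n}. \<exists>m\<in>B. broadcast_in c j s m} s = B"
proof (rule set_eqI)
  fix m
  show "m \<in> msgs_of c {j\<in>{1..n}. \<exists>m\<in>B. broadcast_in c j s m} s \<longleftrightarrow> m \<in> B"
  proof
    assume "m \<in> msgs_of c {j\<in>{1..n}. \<exists>m\<in>B. broadcast_in c j s m} s"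
    then obtain j m' where "broadcast_in c j s m" "broadcast_in c j s m'" "m' \<in> B"
      unfolding msgs_of_def by blast
    then show "m \<in> B"
      using broadcast_in_unique[OF assms(1)] by metis
  next
    assume "m \<in> B"
    then obtain j where "j \<in> {1..n}" "broadcast_in c j s m"
      using assms(2) unfolding msgs_of_def by blast
    then show "m \<in> msgs_of c {j\<in>{1..n}. \<exists>m\<in>B. broadcast_in c j s m} s"
      using \<open>m \<in> B\<close> unfolding msgs_of_def by blast
  qed
qed

lemma broadcast_threshold:
  assumes "1 \<le> s" "returns_at c i s R B" "tr \<le> n" "0 < ts" "ts \<le> tr"
    and tb: "real tb \<le> real n - real tr * real (n - tr) / real (tr - ts + 1)"
  shows "threshold_set n c s tb B"
proof -
  obtain t where res: "\<And>t'. t \<le> t' \<Longrightarrow>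
      (R, B) = tlcb_result ts (Rv (loc (c t') i) (2*s)) (Rv (loc (c t') i) (2*s+1))
      \<and> 2*s+1 < stp (loc (c t') i)"
    using returns_at_tlcb_result[OF assms(2,1)] by blast
  define K where "K = fst ` Rv (loc (c t) i) (2*s+1)"
  define N where "N k = fst ` Rv (loc (c t) k) (2*s)" for k
  define NB where "NB = {j\<in>{1..n}. \<exists>m\<in>B. broadcast_in c j s m}"
  have B: "B = {m. ts \<le> card {k\<in>K. m \<in> msgs_of c (N k) s}}"
    using conjunct1[OF res[of t]] unfolding tlcb_result_forwarded[OF config_inv_at]
    by (simp add: first_msgs_eq_msgs_of K_def N_def)
  have K: "K \<subseteq> {1..n}" "tr \<le> card K"
    unfolding K_def using senders_subset[OF config_inv_at] tr_le_card_senders[OF config_inv_at]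
      conjunct2[OF res[of t]] assms(1) by auto
  have N: "\<forall>k\<in>K. N k \<subseteq> {1..n} \<and> tr \<le> card (N k)"
  proof
    fix k assume "k \<in> K"
    then have "2*s < stp (loc (c t) k)"
      unfolding K_def using second_step_entry[OF config_inv_at] by force
    then show "N k \<subseteq> {1..n} \<and> tr \<le> card (N k)"
      unfolding N_def using senders_subset[OF config_inv_at] tr_le_card_senders[OF config_inv_at]
        assms(1) by simp
  qed
  have "B \<subseteq> msgs_of c {1..n} s"
  proof
    fix m assume "m \<in> B"
    then have "{k\<in>K. m \<in> msgs_of c (N k) s} \<noteq> {}"
      using B assms(4) by (metis (no_types, lifting) card.empty mem_Collect_eq not_le)
    then show "m \<in> msgs_of c {1..n} s"
      using N unfolding msgs_of_def by blast
  qed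
  then have "msgs_of c NB s = B"
    unfolding NB_def by (rule msgs_of_broadcasters[OF assms(1)])
  moreover have rare: "\<forall>j\<in>{1..n} - NB. card {k\<in>K. j \<in> N k} < ts"
  proof
    fix j assume "j \<in> {1..n} - NB"
    then have "\<forall>m. broadcast_in c j s m \<longrightarrow> card {k\<in>K. m \<in> msgs_of c (N k) s} < ts"
      using B unfolding NB_def by auto
    moreover have "\<forall>k\<in>K. \<forall>j\<in>N k. \<exists>m. broadcast_in c j s m"
      unfolding N_def using first_step_sender_broadcasts by blast
    ultimately show "card {k\<in>K. j \<in> N k} < ts"
      using card_votes_lt[OF finite_subset[OF K(1)] assms(4)] by blast
  qed
  moreover have NB: "NB \<subseteq> {1..n}" "\<forall>j\<in>NB. \<exists>m. broadcast_in c j s m"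
    unfolding NB_def by auto
  moreover have "real tb \<le> real (card NB)"
    using broadcast_threshold_count[OF K N NB(1) rare assms(3-5)] tb by linarith
  ultimately show ?thesis
    unfolding threshold_set_def by auto
qed

section \<open>Lock-step synchrony\<close>

lemma eventually_delivered:
  assumes "i \<in> {1..n}" "\<not> failed c i" "k \<in> {1..n}"
  shows "\<exists>t'. stp (loc (c t) k) - 1 \<le> dlv (c t') k i"
proof -
  have "\<exists>t'. length (hist (c t) k i) \<le> dlv (c t') k i"
    using execution assms unfolding tlcb_execution_def fair_def by blast
  then show ?thesis
    using config_inv_hist[OF config_inv_at assms(3,1)] by simp
qed

lemma correct_node_catches_up:
  assumes "i \<in> {1..n}" "\<not> failed c i" "k \<in> {1..n}"
  shows "\<exists>t'. stp (loc (c t) k) \<le> stp (loc (c t') i)"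
proof -
  obtain t' where "stp (loc (c t) k) - 1 \<le> dlv (c t') k i"
    using eventually_delivered[OF assms] by blast
  moreover have "dlv (c t') k i \<le> stp (loc (c t') i) - 1"
    using config_inv_dlv[OF config_inv_at assms(3,1)] by blast
  moreover have "1 \<le> stp (loc (c t) k)" "1 \<le> stp (loc (c t') i)"
    using config_inv_lstate_inv[OF config_inv_at] by (auto simp: lstate_inv_def)
  ultimately show ?thesis
    by (intro exI[of _ t']) linarith
qed

lemma recorded_after_delivery:
  assumes stays: "\<And>t'. T \<le> t' \<Longrightarrow> stp (loc (c t') F) = s" and "2 \<le> s"
    and before: "dlv (c T) j F < s - 1" and "T \<le> t" and "s - 1 \<le> dlv (c t) j F"
  shows "j \<in> fst ` Rv (loc (c t) F) s"
  using \<open>T \<le> t\<close> \<open>s - 1 \<le> dlv (c t) j F\<close>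
proof (induction t rule: dec_induct)
  case base
  then show ?case
    using before by linarith
next
  case (step m)
  show ?case
  proof (cases "s - 1 \<le> dlv (c m) j F")
    case True
    then have "j \<in> fst ` Rv (loc (c m) F) s"
      using step.IH by blast
    moreover have "Rv (loc (c m) F) s \<subseteq> Rv (loc (c (Suc m)) F) s"
      using loc_extends[of m "Suc m" F] by (simp add: lstate_extends_def)
    ultimately show ?thesis
      by blast
  next
    case False
    then have "dlv (c m) j F + 2 = stp (loc (c m) F)"
      using tlcb_step_dlv[OF config_inv_at tlcb_step_at, of m j F] step.prems stays[OF step.hyps(1)]
        \<open>2 \<le> s\<close> by auto
    then have "(j, tlcr_payload (loc (c m) j) s) \<in> Rv (loc (c (Suc m)) F) s"
      using tlcb_step_dlv[OF config_inv_at tlcb_step_at, of m j F] False step.prems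
        stays[OF step.hyps(1)] by auto
    then show ?thesis
      by force
  qed
qed

lemma dlv_Suc_le_sent:
  assumes "j \<in> {1..n}" "F \<in> {1..n}"
  shows "dlv (c (Suc t)) j F \<le> stp (loc (c t) j) - 1"
proof -
  have "dlv (c t) j F \<le> stp (loc (c t) j) - 1"
    using config_inv_dlv[OF config_inv_at assms] by blast
  moreover have "length (hist (c t) j F) = stp (loc (c t) j) - 1"
    using config_inv_hist[OF config_inv_at assms] by simp
  moreover have "dlv (c (Suc t)) j F \<le> dlv (c t) j F \<or> dlv (c (Suc t)) j F \<le> length (hist (c t) j F)"
    using tlcb_step_dlv[OF config_inv_at tlcb_step_at, of t j F] by auto
  ultimately show ?thesis
    by (metis order_trans)
qed

lemma eventually_all_delivered:
  assumes A: "A \<subseteq> {1..n}" and F: "F \<in> {1..n}" "\<not> failed c F"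
    and reach: "\<forall>j\<in>A. \<exists>t. s \<le> stp (loc (c t) j)"
  shows "eventually (\<lambda>t. \<forall>j\<in>A. s - 1 \<le> dlv (c t) j F) sequentially"
proof -
  have "eventually (\<lambda>t. s - 1 \<le> dlv (c t) j F) sequentially" if "j \<in> A" for j
  proof -
    from bspec[OF reach that] obtain t where "s \<le> stp (loc (c t) j)" ..
    moreover from eventually_delivered[OF F subsetD[OF A that], of t]
    obtain t' where "stp (loc (c t) j) - 1 \<le> dlv (c t') j F" ..
    ultimately have "s - 1 \<le> dlv (c t') j F"
      by linarith
    show ?thesis
    proof (rule eventually_sequentiallyI)
      fix x assume "t' \<le> x"
      then show "s - 1 \<le> dlv (c x) j F"
        using dlv_mono[of t' x j F] \<open>s - 1 \<le> dlv (c t') j F\<close> by linarith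
    qed
  qed
  then show ?thesis
    using finite_subset[OF A] by (simp add: eventually_ball_finite)
qed

lemma first_arrival:
  assumes NF: "NF \<subseteq> {1..n}" "NF \<noteq> {}" and reach: "\<forall>j\<in>NF. \<exists>t. s \<le> stp (loc (c t) j)"
    and bound: "\<forall>j\<in>{1..n}. \<forall>t. stp (loc (c t) j) \<le> s" and "2 \<le> s"
  shows "\<exists>F T. F \<in> NF \<and> (\<forall>t\<ge>T. stp (loc (c t) F) = s) \<and> (\<forall>j\<in>NF. dlv (c T) j F < s - 1)"
proof -
  define Q where "Q t \<longleftrightarrow> (\<exists>F\<in>NF. s \<le> stp (loc (c t) F))" for t
  have "\<exists>t. Q t"
    using NF(2) reach unfolding Q_def by blast
  define T where "T = (LEAST t. Q t)"
  obtain F where F: "F \<in> NF" "s \<le> stp (loc (c T) F)"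
    using LeastI_ex[OF \<open>\<exists>t. Q t\<close>] unfolding T_def Q_def by blast
  have stays: "stp (loc (c t) F) = s" if "T \<le> t" for t
    using F loc_extends[OF that, of F] bound NF(1) by (force simp: lstate_extends_def)
  have "stp (loc (c 0) F) = 1"
    using execution by (simp add: tlcb_execution_def init_config_def init_lstate_def)
  then obtain T' where T': "T = Suc T'"
    using F(2) \<open>2 \<le> s\<close> by (cases T) auto
  have before: "dlv (c T) j F < s - 1" if "j \<in> NF" for j
  proof -
    have "\<not> Q T'"
      using T' not_less_Least[of T' Q] unfolding T_def by simp
    then have "stp (loc (c T') j) < s"
      using that unfolding Q_def by force
    moreover have "1 \<le> stp (loc (c T') j)"
      using config_inv_lstate_inv[OF config_inv_at] by (simp add: lstate_inv_def)
    moreover have "j \<in> {1..n}" "F \<in> {1..n}"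
      using NF(1) that F(1) by auto
    then have "dlv (c T) j F \<le> stp (loc (c T') j) - 1"
      unfolding T' by (rule dlv_Suc_le_sent)
    ultimately show ?thesis
      by linarith
  qed
  then show ?thesis
    using F(1) stays by blast
qed

text \<open>If the correct nodes all reach step s and no node ever passes it, then the first correct
  node to reach s receives the step-s messages of all correct nodes while still at step s,
  since none of them was sent before; so it collects at least t_r of them and advances.\<close>

lemma no_final_step:
  assumes NF: "NF \<subseteq> {1..n}" "\<forall>j\<in>NF. \<not> failed c j" "tr \<le> card NF"
    and reach: "\<forall>j\<in>NF. \<exists>t. s \<le> stp (loc (c t) j)"
    and bound: "\<forall>j\<in>{1..n}. \<forall>t. stp (loc (c t) j) \<le> s" and "2 \<le> s"
  shows False
proof -
  have "NF \<noteq> {}"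
    using NF(3) tr_pos by auto
  then obtain F T where F: "F \<in> NF" and stays: "\<forall>t\<ge>T. stp (loc (c t) F) = s"
    and before: "\<forall>j\<in>NF. dlv (c T) j F < s - 1"
    using first_arrival[OF NF(1) _ reach bound \<open>2 \<le> s\<close>] by blast
  have "F \<in> {1..n}" "\<not> failed c F"
    using NF(1,2) F by auto
  then have "eventually (\<lambda>t. \<forall>j\<in>NF. s - 1 \<le> dlv (c t) j F) sequentially"
    by (rule eventually_all_delivered[OF NF(1) _ _ reach])
  then have "eventually (\<lambda>t. T \<le> t \<and> (\<forall>j\<in>NF. s - 1 \<le> dlv (c t) j F)) sequentially"
    by (rule eventually_conj[OF eventually_ge_at_top])
  then obtain t where t: "T \<le> t" "\<forall>j\<in>NF. s - 1 \<le> dlv (c t) j F"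
    using eventually_happens'[OF sequentially_bot] by blast
  have fin: "finite (Rv (loc (c t) F) s)"
    using config_inv_lstate_inv[OF config_inv_at] by (simp add: lstate_inv_def)
  have "NF \<subseteq> fst ` Rv (loc (c t) F) s"
  proof
    fix j assume "j \<in> NF"
    show "j \<in> fst ` Rv (loc (c t) F) s"
      by (rule recorded_after_delivery[OF stays[rule_format] \<open>2 \<le> s\<close>
        before[rule_format, OF \<open>j \<in> NF\<close>] t(1) t(2)[rule_format, OF \<open>j \<in> NF\<close>]])
  qed
  then have "tr \<le> card (fst ` Rv (loc (c t) F) s)"
    using NF(3) card_mono[OF finite_imageI[OF fin]] by fastforce
  also have "\<dots> \<le> card (Rv (loc (c t) F) s)"
    using card_image_le[OF fin] .
  also have "\<dots> < tr"
    using config_inv_lstate_inv[OF config_inv_at, of t F] stays t(1) by (simp add: lstate_inv_def)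
  finally show False
    by simp
qed

text \<open>Take the least step s at which some correct node stays forever: all correct nodes reach s,
  and no node passes it, since the stuck node would eventually receive its messages.\<close>

lemma correct_node_progresses:
  assumes "tr \<le> n - f" "card {j \<in> {1..n}. failed c j} \<le> f" "i \<in> {1..n}" "\<not> failed c i"
  shows "\<exists>t. S \<le> stp (loc (c t) i)"
proof (rule ccontr)
  assume stuck_i: "\<nexists>t. S \<le> stp (loc (c t) i)"
  define NF where "NF = {j \<in> {1..n}. \<not> failed c j}"
  have "tr \<le> card NF"
    using card_filter_not_ge[OF assms(2)] assms(1) unfolding NF_def by linarith
  define P where "P s \<longleftrightarrow> (\<exists>j\<in>NF. \<forall>t. stp (loc (c t) j) \<le> s)" for s
  have "P S"
    using stuck_i assms(3,4) unfolding P_def NF_def by (auto simp: not_le less_imp_le)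
  define s where "s = (LEAST s. P s)"
  have "P s"
    unfolding s_def by (rule LeastI[of P, OF \<open>P S\<close>])
  then obtain i0 where i0: "i0 \<in> NF" "\<forall>t. stp (loc (c t) i0) \<le> s"
    unfolding P_def by blast
  obtain t where "2 \<le> stp (loc (c t) i0)"
    using execution i0(1) unfolding tlcb_execution_def fair_def NF_def by blast
  then have "2 \<le> s"
    using i0(2) by (meson le_trans)
  have reach: "\<forall>j\<in>NF. \<exists>t. s \<le> stp (loc (c t) j)"
  proof
    fix j assume "j \<in> NF"
    have "\<not> P (s - 1)"
      using not_less_Least[of "s - 1" P] \<open>2 \<le> s\<close> unfolding s_def by linarith
    then obtain t where "\<not> stp (loc (c t) j) \<le> s - 1"
      using \<open>j \<in> NF\<close> unfolding P_def by blast
    then show "\<exists>t. s \<le> stp (loc (c t) j)"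
      by (intro exI[of _ t]) linarith
  qed
  have bound: "\<forall>j\<in>{1..n}. \<forall>t. stp (loc (c t) j) \<le> s"
  proof (intro ballI allI)
    fix j t assume "j \<in> {1..n}"
    then obtain t' where "stp (loc (c t) j) \<le> stp (loc (c t') i0)"
      using correct_node_catches_up[of i0 j t] i0(1) unfolding NF_def by blast
    then show "stp (loc (c t) j) \<le> s"
      using i0(2) by (meson le_trans)
  qed
  have "NF \<subseteq> {1..n}" "\<forall>j\<in>NF. \<not> failed c j"
    by (auto simp: NF_def)
  then show False
    using no_final_step \<open>tr \<le> card NF\<close> reach bound \<open>2 \<le> s\<close> by blast
qed

end

theorem theorem4:
  fixes n f tr ts tb :: nat
    and app :: "'m app"
    and c :: "nat \<Rightarrow> 'm config"
  assumes "0 < tr" and "tr \<le> n - f"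
    and "0 < ts" and "ts \<le> tr" and "n < tr + ts"
    and "0 < tb"
    and "real tb \<le> real n - real tr * real (n - tr) / real (tr - ts + 1)"
    and "tlcb_execution n tr ts app c"
    and "card {i \<in> {1..n}. failed c i} \<le> f"
  shows "TSB_full n tr tb c"
proof -
  interpret tlcb_run n tr ts app c
    using assms(1,8) by unfold_locales
  have "\<exists>R B. returns_at c i s R B" if correct: "i \<in> {1..n}" "\<not> failed c i" for i s
  proof -
    obtain t where "2*s+2 \<le> stp (loc (c t) i)"
      using correct_node_progresses[OF assms(2,9) correct] by blast
    then show ?thesis
      by (rule returns_at_if_stp)
  qed
  moreover have "threshold_set n c s tr R \<and> threshold_set n c s tb B"
    if "returns_at c i s R B" "1 \<le> s" for i s R B
    using receive_threshold[OF that] broadcast_threshold[OF that(2,1) _ assms(3,4,7)] assms(2) by simp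
  moreover have "m \<in> R'" if "returns_at c i s R B" "m \<in> B" "returns_at c j s R' B'" "1 \<le> s"
    for i j s R B R' B' m
    using full_spread[OF assms(5) that(4,1-3)] .
  ultimately show ?thesis
    unfolding TSB_full_def by blast
qed

end
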